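(* Let $\Phi:\mathbb{R}^N\to\mathbb{R}^M$ and $L:\mathbb{R}^P\to\mathbb{R}^N$ be linear operators, let $\|\cdot\|_A$ be a norm on $\mathbb{R}^P$ with dual norm $\|\cdot\|_A^*$, and set $R(x)=\|L^*x\|_A$. Let $y\in\mathbb{R}^M$, $\lambda>0$, and let $x^\star$ be a minimizer of $$\min_{x\in\mathbb{R}^N}\ \tfrac12\|y-\Phi x\|_2^2+\lambda R(x).$$ Assume $\|\cdot\|_A$ is decomposable at $u^\star=L^*x^\star$, with associated subspace $T$ and vector $e\in T$, and let $S=T^\perp$. If $$\langle L_T^*h,\,e\rangle<\|L_S^*h\|_A\qquad\text{for all } h\in\ker(\Phi)\setminus\{0\},$$ then $x^\star$ is the unique minimizer of this problem.
   Context: For a subspace $V\subset\mathbb{R}^P$, $P_V$ denotes the orthogonal projector onto $V$, and $L_V=LP_V$, $L_V^*=P_VL^*$, $\alpha_V=P_V\alpha$ for $\alpha\in\mathbb{R}^P$. A norm $\|\cdot\|_A$ on $\mathbb{R}^P$ is decomposable at $u\in\mathbb{R}^P$ if (i) there exist a subspace $T\subset\mathbb{R}^P$ and a vector $e\in T$ such that the subdifferential of $\|\cdot\|_A$ at $u$ is $\partial\|\cdot\|_A(u)=\{\alpha\in\mathbb{R}^P:\ \alpha_T=e,\ \|\alpha_{T^\perp}\|_A^*\le 1\}$, and (ii) for every $z\in T^\perp$, $\|z\|_A=\sup\{\langle v,z\rangle: v\in T^\perp,\ \|v\|_A^*\le 1\}$. *)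

theory Defs
  imports "HOL-Analysis.Analysis"
begin

definition is_norm :: "('a::real_inner \<Rightarrow> real) \<Rightarrow> bool" where
  "is_norm f \<longleftrightarrow> (\<forall>x. 0 \<le> f x) \<and> (\<forall>x. f x = 0 \<longleftrightarrow> x = 0)
     \<and> (\<forall>c x. f (c *\<^sub>R x) = \<bar>c\<bar> * f x) \<and> (\<forall>x y. f (x + y) \<le> f x + f y)"

definition dual_norm :: "('a::real_inner \<Rightarrow> real) \<Rightarrow> 'a \<Rightarrow> real" where
  "dual_norm f v = Sup {inner v z | z. f z \<le> 1}"

definition subdiff :: "('a::real_inner \<Rightarrow> real) \<Rightarrow> 'a \<Rightarrow> 'a set" where
  "subdiff f u = {\<alpha>. \<forall>z. f u + inner \<alpha> (z - u) \<le> f z}"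

definition proj :: "'a::euclidean_space set \<Rightarrow> 'a \<Rightarrow> 'a" where
  "proj V x = (THE p. p \<in> V \<and> (\<forall>v\<in>V. inner (x - p) v = 0))"

definition decomposable_at :: "('a::euclidean_space \<Rightarrow> real) \<Rightarrow> 'a \<Rightarrow> 'a set \<Rightarrow> 'a \<Rightarrow> bool" where
  "decomposable_at f u T e \<longleftrightarrow> subspace T \<and> e \<in> T
     \<and> subdiff f u = {\<alpha>. proj T \<alpha> = e \<and> dual_norm f (proj (orthogonal_comp T) \<alpha>) \<le> 1}
     \<and> (\<forall>z \<in> orthogonal_comp T.
          f z = Sup {inner v z | v. v \<in> orthogonal_comp T \<and> dual_norm f v \<le> 1})"

end

theory Submission
  imports Defs
begin

text \<open>Two minimizers of a least-squares term plus a convex penalty have the same image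
  under \<open>\<Phi>\<close>, because the squared norm is strictly convex: at their midpoint the objective
  drops by \<open>\<parallel>\<Phi> x - \<Phi> x'\<parallel>\<^sup>2/8\<close> below the (common) minimal value. Hence a second minimizer
  \<open>x = x\<^sup>\<star> + h\<close> has \<open>h \<in> ker \<Phi>\<close> and \<open>R x = R x\<^sup>\<star>\<close>. Decomposability then says that \<open>e + v\<close> is a
  subgradient of the norm at \<open>L\<^sup>* x\<^sup>\<star>\<close> for every \<open>v \<in> S\<close> of dual norm at most one; the
  subgradient inequality along \<open>L\<^sup>* h\<close>, maximized over \<open>v\<close>, gives
  \<open>\<parallel>L\<^sub>S\<^sup>* h\<parallel>\<^sub>A \<le> -\<langle>L\<^sub>T\<^sup>* h, e\<rangle>\<close>, which contradicts the hypothesis applied to \<open>-h\<close> unless \<open>h = 0\<close>.\<close>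

lemma proj_unique:
  fixes V :: "'a::euclidean_space set"
  assumes "subspace V" "p \<in> V" "\<forall>v\<in>V. inner (x - p) v = 0"
  shows "proj V x = p"
  unfolding proj_def
proof (rule the1_equality)
  show "\<exists>!p. p \<in> V \<and> (\<forall>v\<in>V. inner (x - p) v = 0)"
  proof (rule ex1I[of _ p])
    fix q assume q: "q \<in> V \<and> (\<forall>v\<in>V. inner (x - q) v = 0)"
    have "q - p \<in> V" using q assms subspace_diff by blast
    have "inner (q - p) (q - p) = inner (x - p) (q - p) - inner (x - q) (q - p)"
      by (simp add: inner_diff_left inner_diff_right)
    also have "\<dots> = 0" using q assms(3) \<open>q - p \<in> V\<close> by simp
    finally show "q = p" by simp
  qed (use assms in auto)
qed (use assms in auto)

lemma proj_in_and_orthogonal: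
  fixes V :: "'a::euclidean_space set"
  assumes "subspace V"
  shows "proj V x \<in> V \<and> (\<forall>v\<in>V. inner (x - proj V x) v = 0)"
proof -
  obtain a b where ab: "a \<in> span V" "\<And>w. w \<in> span V \<Longrightarrow> orthogonal b w" "x = a + b"
    using orthogonal_subspace_decomp_exists by blast
  have "span V = V" using assms by (simp add: span_eq_iff)
  with ab assms have "proj V x = a"
    by (intro proj_unique) (auto simp: orthogonal_def)
  with ab \<open>span V = V\<close> show ?thesis by (auto simp: orthogonal_def)
qed

lemma inner_proj:
  fixes V :: "'a::euclidean_space set"
  assumes "subspace V" "v \<in> V"
  shows "inner v (proj V x) = inner v x"
  using proj_in_and_orthogonal[OF assms(1), of x] assms(2)
  by (auto simp: inner_diff_right inner_commute)

lemma proj_uminus: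
  fixes V :: "'a::euclidean_space set"
  assumes "subspace V"
  shows "proj V (- x) = - proj V x"
  using proj_in_and_orthogonal[OF assms, of x] assms
  by (intro proj_unique) (auto simp: subspace_neg inner_diff_left)

lemma proj_add_orthogonal_comp:
  fixes T :: "'a::euclidean_space set"
  assumes "subspace T" "t \<in> T" "s \<in> orthogonal_comp T"
  shows "proj T (t + s) = t" and "proj (orthogonal_comp T) (t + s) = s"
  using assms subspace_orthogonal_comp[of T]
  by (auto intro!: proj_unique simp: orthogonal_comp_def orthogonal_def inner_commute)

lemma is_norm_uminus: "is_norm f \<Longrightarrow> f (- x) = f x"
  unfolding is_norm_def by (metis abs_neg_one mult_1 scaleR_minus1_left)

lemma dual_norm_zero: "is_norm f \<Longrightarrow> dual_norm f 0 = 0"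
proof -
  assume "is_norm f"
  then have "f 0 = 0" unfolding is_norm_def by blast
  then have "{inner 0 z | z. f z \<le> 1} = {0::real}" by (auto intro!: exI[of _ 0])
  then show ?thesis unfolding dual_norm_def by simp
qed

lemma convex_on_is_norm_linear:
  assumes "is_norm f" "linear g"
  shows "convex_on UNIV (\<lambda>x. f (g x))"
  unfolding convex_on_def
proof (intro conjI convex_UNIV ballI allI impI)
  fix x y and u v :: real
  assume "0 \<le> u" "0 \<le> v"
  have "f (g (u *\<^sub>R x + v *\<^sub>R y)) = f (u *\<^sub>R g x + v *\<^sub>R g y)"
    using assms(2) by (simp add: linear_add linear_scale)
  also have "\<dots> \<le> f (u *\<^sub>R g x) + f (v *\<^sub>R g y)"
    using assms(1) unfolding is_norm_def by blast
  also have "\<dots> = u * f (g x) + v * f (g y)"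
    using assms(1) \<open>0 \<le> u\<close> \<open>0 \<le> v\<close> unfolding is_norm_def by simp
  finally show "f (g (u *\<^sub>R x + v *\<^sub>R y)) \<le> u * f (g x) + v * f (g y)" .
qed

lemma norm_diff_midpoint_square:
  fixes y a b :: "'a::real_inner"
  shows "(norm (y - (1/2) *\<^sub>R (a + b)))\<^sup>2
    = ((norm (y - a))\<^sup>2 + (norm (y - b))\<^sup>2) / 2 - (norm (a - b))\<^sup>2 / 4"
  by (simp add: power2_norm_eq_inner inner_add_left inner_add_right
      inner_diff_right inner_commute algebra_simps) (simp add: field_simps)

lemma least_squares_convex_minimizers_same_image:
  fixes Phi :: "'a::real_vector \<Rightarrow> 'b::real_inner"
  assumes "linear Phi" and "convex_on UNIV g"
    and "\<forall>z. (1/2) * (norm (y - Phi x))\<^sup>2 + g x \<le> (1/2) * (norm (y - Phi z))\<^sup>2 + g z"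
    and "\<forall>z. (1/2) * (norm (y - Phi x'))\<^sup>2 + g x' \<le> (1/2) * (norm (y - Phi z))\<^sup>2 + g z"
  shows "Phi x = Phi x'"
proof -
  define F where "F z = (1/2) * (norm (y - Phi z))\<^sup>2 + g z" for z
  define m where "m = (1/2) *\<^sub>R (x + x')"
  have "F x = F x'" using assms(3,4) unfolding F_def by (meson order_antisym)
  have "g m \<le> (g x + g x') / 2"
    using convex_onD[OF assms(2), of "1/2" x x'] unfolding m_def by (simp add: scaleR_add_right)
  moreover have "Phi m = (1/2) *\<^sub>R (Phi x + Phi x')"
    unfolding m_def using assms(1) by (simp add: linear_add linear_scale)
  ultimately have "F m \<le> (F x + F x') / 2 - (norm (Phi x - Phi x'))\<^sup>2 / 8"
    using norm_diff_midpoint_square[of y "Phi x" "Phi x'"] unfolding F_def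
    by simp (simp add: field_simps)
  moreover have "F x \<le> F m" using assms(3) unfolding F_def by blast
  ultimately have "(norm (Phi x - Phi x'))\<^sup>2 \<le> 0" using \<open>F x = F x'\<close> by argo
  then show ?thesis by simp
qed

lemma decomposable_at_norm_proj_le:
  assumes "is_norm f" and dec: "decomposable_at f u T e" and "f (u + w) \<le> f u"
  shows "f (proj (orthogonal_comp T) w) \<le> - inner e w"
proof -
  define S where "S = orthogonal_comp T"
  have "subspace T" "e \<in> T" "subspace S"
    and subdiff: "subdiff f u = {\<alpha>. proj T \<alpha> = e \<and> dual_norm f (proj S \<alpha>) \<le> 1}"
    and sup: "\<forall>z \<in> S. f z = Sup {inner v z | v. v \<in> S \<and> dual_norm f v \<le> 1}"
    using dec subspace_orthogonal_comp unfolding decomposable_at_def S_def by auto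
  have bound: "inner v (proj S w) \<le> - inner e w" if "v \<in> S" "dual_norm f v \<le> 1" for v
  proof -
    have "e + v \<in> subdiff f u"
      using subdiff proj_add_orthogonal_comp[OF \<open>subspace T\<close> \<open>e \<in> T\<close>] that
      unfolding S_def by simp
    then have "f u + inner (e + v) ((u + w) - u) \<le> f (u + w)"
      unfolding subdiff_def by blast
    moreover have "inner (e + v) w = inner e w + inner v (proj S w)"
      using inner_proj[OF \<open>subspace S\<close> \<open>v \<in> S\<close>] by (simp add: inner_add_left)
    ultimately show ?thesis using assms(3) by simp
  qed
  have "0 \<in> {inner v (proj S w) | v. v \<in> S \<and> dual_norm f v \<le> 1}"
    using dual_norm_zero[OF assms(1)] subspace_0[OF \<open>subspace S\<close>] by force
  then have "Sup {inner v (proj S w) | v. v \<in> S \<and> dual_norm f v \<le> 1} \<le> - inner e w"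
    using bound by (intro cSup_least) auto
  then show ?thesis
    using sup proj_in_and_orthogonal[OF \<open>subspace S\<close>] unfolding S_def by simp
qed

theorem theorem1:
  fixes Phi :: "real^'n \<Rightarrow> real^'m"
    and L :: "real^'p \<Rightarrow> real^'n"
    and nA :: "real^'p \<Rightarrow> real"
    and y :: "real^'m" and lam :: real and xs :: "real^'n"
    and T :: "(real^'p) set" and e :: "real^'p"
  assumes "linear Phi" and "linear L" and "is_norm nA" and "lam > 0"
    and min: "\<forall>x. (1/2) * (norm (y - Phi xs))\<^sup>2 + lam * nA (adjoint L xs)
                  \<le> (1/2) * (norm (y - Phi x))\<^sup>2 + lam * nA (adjoint L x)"
    and dec: "decomposable_at nA (adjoint L xs) T e"
    and cond: "\<forall>h. Phi h = 0 \<and> h \<noteq> 0 \<longrightarrow>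
       inner (proj T (adjoint L h)) e < nA (proj (orthogonal_comp T) (adjoint L h))"
  shows "\<forall>x. (\<forall>z. (1/2) * (norm (y - Phi x))\<^sup>2 + lam * nA (adjoint L x)
                  \<le> (1/2) * (norm (y - Phi z))\<^sup>2 + lam * nA (adjoint L z)) \<longrightarrow> x = xs"
proof (intro allI impI)
  fix x
  assume minx: "\<forall>z. (1/2) * (norm (y - Phi x))\<^sup>2 + lam * nA (adjoint L x)
                  \<le> (1/2) * (norm (y - Phi z))\<^sup>2 + lam * nA (adjoint L z)"
  have linL: "linear (adjoint L)" using \<open>linear L\<close> by (rule adjoint_linear)
  have "convex_on UNIV (\<lambda>z. lam * nA (adjoint L z))"
    using \<open>lam > 0\<close> convex_on_is_norm_linear[OF \<open>is_norm nA\<close> linL] by auto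
  then have "Phi x = Phi xs"
    using least_squares_convex_minimizers_same_image[OF \<open>linear Phi\<close> _ minx min] by blast
  then have "nA (adjoint L x) = nA (adjoint L xs)"
    using minx[rule_format, of xs] min[rule_format, of x] \<open>lam > 0\<close> by simp
  define h where "h = x - xs"
  define S where "S = orthogonal_comp T"
  have "subspace T" "e \<in> T" "subspace S"
    using dec subspace_orthogonal_comp unfolding decomposable_at_def S_def by auto
  have "adjoint L xs + adjoint L h = adjoint L x" unfolding h_def by (simp add: linL linear_diff)
  then have "nA (proj S (adjoint L h)) \<le> - inner (proj T (adjoint L h)) e"
    using decomposable_at_norm_proj_le[OF \<open>is_norm nA\<close> dec, of "adjoint L h"]
      \<open>nA (adjoint L x) = nA (adjoint L xs)\<close> inner_proj[OF \<open>subspace T\<close> \<open>e \<in> T\<close>]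
    unfolding S_def by (simp add: inner_commute)
  moreover have "Phi (- h) = 0" "- h \<noteq> 0" if "x \<noteq> xs"
    using \<open>Phi x = Phi xs\<close> that \<open>linear Phi\<close> unfolding h_def by (auto simp: linear_diff)
  ultimately show "x = xs"
    using cond[rule_format, of "- h"] is_norm_uminus[OF \<open>is_norm nA\<close>]
      proj_uminus[OF \<open>subspace T\<close>] proj_uminus[OF \<open>subspace S\<close>]
    unfolding S_def by (fastforce simp: linear_neg[OF linL])
qed

end
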